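(* Let $(X,\tau)$ be an extended locally convex space and let $Y$ be a linear subspace of $X$. Then for every linear functional $f$ on $Y$ continuous with respect to $\tau|_Y$, there exists a $\tau$-continuous linear functional $\hat f$ on $X$ with $\hat f|_Y=f$.
   Context: An extended seminorm on a vector space $X$ over $\mathbb{R}$ or $\mathbb{C}$ is a map $\rho:X\to[0,\infty]$ with $\rho(\alpha x)=|\alpha|\rho(x)$ and $\rho(x+y)\le\rho(x)+\rho(y)$. An extended locally convex space $(X,\tau)$ is a vector space with the topology induced by a family $\{\rho_i\}$ of extended seminorms (neighborhood base at $x_0$: $\{x:\max_{i\in J}\rho_i(x-x_0)<\varepsilon\}$, $J$ finite, $\varepsilon>0$). *)

theory Defs
  imports "HOL-Analysis.Analysis"
begin

definition ext_seminorm :: "('k::real_normed_field \<Rightarrow> 'v::ab_group_add \<Rightarrow> 'v) \<Rightarrow> ('v \<Rightarrow> ennreal) \<Rightarrow> bool" where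
  "ext_seminorm smul \<rho> \<longleftrightarrow>
     (\<forall>\<alpha> x. \<rho> (smul \<alpha> x) = ennreal (norm \<alpha>) * \<rho> x) \<and>
     (\<forall>x y. \<rho> (x + y) \<le> \<rho> x + \<rho> y)"

definition elc_topology :: "('v::ab_group_add \<Rightarrow> ennreal) set \<Rightarrow> 'v topology" where
  "elc_topology P = topology (\<lambda>U. \<forall>x0\<in>U. \<exists>J (\<epsilon>::real). finite J \<and> J \<subseteq> P \<and> \<epsilon> > 0 \<and>
       {x. \<forall>\<rho>\<in>J. \<rho> (x - x0) < ennreal \<epsilon>} \<subseteq> U)"

definition linear_functional_on :: "('k::field \<Rightarrow> 'v::ab_group_add \<Rightarrow> 'v) \<Rightarrow> 'v set \<Rightarrow> ('v \<Rightarrow> 'k) \<Rightarrow> bool" where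
  "linear_functional_on smul Y f \<longleftrightarrow>
     (\<forall>x\<in>Y. \<forall>y\<in>Y. f (x + y) = f x + f y) \<and> (\<forall>a. \<forall>x\<in>Y. f (smul a x) = a * f x)"

end

theory Submission
  imports Defs
begin

text \<open>Continuity of \<open>f\<close> on \<open>Y\<close> provides finitely many seminorms of the family and \<open>\<epsilon> > 0\<close>
  such that \<open>|f| < 1\<close> on \<open>Y \<inter> {q < \<epsilon>}\<close>, where \<open>q\<close> is their sum, again an extended seminorm.
  By homogeneity \<open>|f| \<le> q / \<epsilon>\<close> on \<open>Y\<close> wherever \<open>q\<close> is finite. The set \<open>S\<close> where \<open>q\<close> is finite
  is a subspace on which \<open>q / \<epsilon>\<close> is a real seminorm, and the Zorn argument of Hahn--Banach
  works verbatim when domination is only required on \<open>S\<close>: it extends \<open>f\<close> to a linear \<open>g\<close> on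
  the whole space with \<open>|g| \<le> q / \<epsilon>\<close> on \<open>S\<close>. Then \<open>g\<close> is bounded on the ball \<open>{q < \<epsilon>}\<close>,
  which makes it continuous. In the complex case one extends the real part \<open>G\<close> of \<open>f\<close> and
  takes \<open>g x = G x - i G (i x)\<close>.\<close>

lemma istopology_elc:
  "istopology (\<lambda>U. \<forall>x0\<in>U. \<exists>J (\<epsilon>::real). finite J \<and> J \<subseteq> P \<and> \<epsilon> > 0 \<and>
       {x. \<forall>\<rho>\<in>J. \<rho> (x - x0) < ennreal \<epsilon>} \<subseteq> U)"
  unfolding istopology_def
proof (intro conjI allI impI ballI)
  fix S T x0
  assume "\<forall>x0\<in>S. \<exists>J (\<epsilon>::real). finite J \<and> J \<subseteq> P \<and> \<epsilon> > 0 \<and> {x. \<forall>\<rho>\<in>J. \<rho> (x - x0) < ennreal \<epsilon>} \<subseteq> S"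
    and "\<forall>x0\<in>T. \<exists>J (\<epsilon>::real). finite J \<and> J \<subseteq> P \<and> \<epsilon> > 0 \<and> {x. \<forall>\<rho>\<in>J. \<rho> (x - x0) < ennreal \<epsilon>} \<subseteq> T"
    and "x0 \<in> S \<inter> T"
  then obtain J1 \<epsilon>1 J2 \<epsilon>2 where
    J1: "finite J1" "J1 \<subseteq> P" "\<epsilon>1 > 0" "{x. \<forall>\<rho>\<in>J1. \<rho> (x - x0) < ennreal \<epsilon>1} \<subseteq> S" and
    J2: "finite J2" "J2 \<subseteq> P" "\<epsilon>2 > 0" "{x. \<forall>\<rho>\<in>J2. \<rho> (x - x0) < ennreal \<epsilon>2} \<subseteq> T"
    by (meson IntD1 IntD2)
  have "{x. \<forall>\<rho>\<in>J1 \<union> J2. \<rho> (x - x0) < ennreal (min \<epsilon>1 \<epsilon>2)} \<subseteq> S \<inter> T"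
  proof safe
    fix x assume x: "\<forall>\<rho>\<in>J1 \<union> J2. \<rho> (x - x0) < ennreal (min \<epsilon>1 \<epsilon>2)"
    have "ennreal (min \<epsilon>1 \<epsilon>2) \<le> ennreal \<epsilon>1" "ennreal (min \<epsilon>1 \<epsilon>2) \<le> ennreal \<epsilon>2"
      by (simp_all add: ennreal_leI)
    then have "\<forall>\<rho>\<in>J1. \<rho> (x - x0) < ennreal \<epsilon>1" "\<forall>\<rho>\<in>J2. \<rho> (x - x0) < ennreal \<epsilon>2"
      using x by (meson UnCI order_less_le_trans)+
    then show "x \<in> S" "x \<in> T"
      using J1(4) J2(4) by blast+
  qed
  then show "\<exists>J (\<epsilon>::real). finite J \<and> J \<subseteq> P \<and> \<epsilon> > 0 \<and>
      {x. \<forall>\<rho>\<in>J. \<rho> (x - x0) < ennreal \<epsilon>} \<subseteq> S \<inter> T"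
    using J1 J2 by (intro exI[of _ "J1 \<union> J2"] exI[of _ "min \<epsilon>1 \<epsilon>2"]) auto
next
  fix K x0
  assume "\<forall>S\<in>K. \<forall>x0\<in>S. \<exists>J (\<epsilon>::real). finite J \<and> J \<subseteq> P \<and> \<epsilon> > 0 \<and>
      {x. \<forall>\<rho>\<in>J. \<rho> (x - x0) < ennreal \<epsilon>} \<subseteq> S" and "x0 \<in> \<Union>K"
  then show "\<exists>J (\<epsilon>::real). finite J \<and> J \<subseteq> P \<and> \<epsilon> > 0 \<and>
      {x. \<forall>\<rho>\<in>J. \<rho> (x - x0) < ennreal \<epsilon>} \<subseteq> \<Union>K"
    by (meson Union_iff subset_iff)
qed

lemma openin_elc_topology:
  "openin (elc_topology P) U \<longleftrightarrow> (\<forall>x0\<in>U. \<exists>J (\<epsilon>::real). finite J \<and> J \<subseteq> P \<and> \<epsilon> > 0 \<and>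
       {x. \<forall>\<rho>\<in>J. \<rho> (x - x0) < ennreal \<epsilon>} \<subseteq> U)"
  unfolding elc_topology_def using istopology_elc[of P] by simp

lemma topspace_elc_topology [simp]: "topspace (elc_topology P) = UNIV"
proof -
  have "openin (elc_topology P) UNIV"
    unfolding openin_elc_topology by (intro ballI exI[of _ "{}"] exI[of _ "1::real"]) auto
  then show ?thesis
    using openin_subset by blast
qed

lemma sum_ennreal_less_if_each_less:
  fixes u :: "'i \<Rightarrow> ennreal"
  assumes "finite J" "\<epsilon> > 0" "\<forall>j\<in>J. u j < ennreal (\<epsilon> / (card J + 1))"
  shows "(\<Sum>j\<in>J. u j) < ennreal \<epsilon>"
proof -
  have "(\<Sum>j\<in>J. u j) \<le> (\<Sum>j\<in>J. ennreal (\<epsilon> / (card J + 1)))"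
    using assms(3) by (intro sum_mono) (simp add: less_imp_le)
  also have "\<dots> = of_nat (card J) * ennreal (\<epsilon> / (card J + 1))"
    by simp
  also have "\<dots> = ennreal (card J * (\<epsilon> / (card J + 1)))"
    using assms(2) by (subst ennreal_mult) (auto simp: ennreal_of_nat_eq_real_of_nat)
  also have "\<dots> < ennreal \<epsilon>"
    using assms(2) by (intro ennreal_lessI) (auto simp: field_simps)
  finally show ?thesis .
qed

lemma elc_neighbourhood_iff_sum_neighbourhood:
  "(\<exists>J (\<epsilon>::real). finite J \<and> J \<subseteq> P \<and> \<epsilon> > 0 \<and> {x. \<forall>\<rho>\<in>J. \<rho> (x - x0) < ennreal \<epsilon>} \<subseteq> U) \<longleftrightarrow>
   (\<exists>J (\<epsilon>::real). finite J \<and> J \<subseteq> P \<and> \<epsilon> > 0 \<and> {x. (\<Sum>\<rho>\<in>J. \<rho> (x - x0)) < ennreal \<epsilon>} \<subseteq> U)"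
proof (intro iffI; elim exE conjE)
  fix J and \<epsilon> :: real
  assume J: "finite J" "J \<subseteq> P" "\<epsilon> > 0" and sub: "{x. \<forall>\<rho>\<in>J. \<rho> (x - x0) < ennreal \<epsilon>} \<subseteq> U"
  have "\<rho> (x - x0) < ennreal \<epsilon>" if "(\<Sum>\<rho>\<in>J. \<rho> (x - x0)) < ennreal \<epsilon>" "\<rho> \<in> J" for x \<rho>
    using that J(1) member_le_sum[of \<rho> J "\<lambda>\<rho>. \<rho> (x - x0)"] by simp
  then have "{x. (\<Sum>\<rho>\<in>J. \<rho> (x - x0)) < ennreal \<epsilon>} \<subseteq> U"
    using sub by blast
  with J show "\<exists>J (\<epsilon>::real). finite J \<and> J \<subseteq> P \<and> \<epsilon> > 0 \<and>
      {x. (\<Sum>\<rho>\<in>J. \<rho> (x - x0)) < ennreal \<epsilon>} \<subseteq> U"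
    by blast
next
  fix J and \<epsilon> :: real
  assume J: "finite J" "J \<subseteq> P" "\<epsilon> > 0" and sub: "{x. (\<Sum>\<rho>\<in>J. \<rho> (x - x0)) < ennreal \<epsilon>} \<subseteq> U"
  have "(\<Sum>\<rho>\<in>J. \<rho> (x - x0)) < ennreal \<epsilon>"
    if "\<forall>\<rho>\<in>J. \<rho> (x - x0) < ennreal (\<epsilon> / (card J + 1))" for x
    using sum_ennreal_less_if_each_less[OF J(1,3) that] .
  then have "{x. \<forall>\<rho>\<in>J. \<rho> (x - x0) < ennreal (\<epsilon> / (card J + 1))} \<subseteq> U"
    using sub by blast
  moreover have "\<epsilon> / (card J + 1) > 0"
    using J(3) by simp
  ultimately show "\<exists>J (\<epsilon>::real). finite J \<and> J \<subseteq> P \<and> \<epsilon> > 0 \<and>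
      {x. \<forall>\<rho>\<in>J. \<rho> (x - x0) < ennreal \<epsilon>} \<subseteq> U"
    using J(1,2) by blast
qed

lemma openin_elc_topology_sum:
  "openin (elc_topology P) U \<longleftrightarrow> (\<forall>x0\<in>U. \<exists>J (\<epsilon>::real). finite J \<and> J \<subseteq> P \<and> \<epsilon> > 0 \<and>
       {x. (\<Sum>\<rho>\<in>J. \<rho> (x - x0)) < ennreal \<epsilon>} \<subseteq> U)"
  unfolding openin_elc_topology elc_neighbourhood_iff_sum_neighbourhood ..

lemma ext_seminorm_sum:
  assumes "\<forall>\<rho>\<in>J. ext_seminorm smul \<rho>"
  shows "ext_seminorm smul (\<lambda>x. \<Sum>\<rho>\<in>J. \<rho> x)"
  unfolding ext_seminorm_def
proof (intro conjI allI)
  fix \<alpha> x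
  show "(\<Sum>\<rho>\<in>J. \<rho> (smul \<alpha> x)) = ennreal (norm \<alpha>) * (\<Sum>\<rho>\<in>J. \<rho> x)"
    using assms unfolding ext_seminorm_def sum_distrib_left by (intro sum.cong) auto
next
  fix x y
  have "(\<Sum>\<rho>\<in>J. \<rho> (x + y)) \<le> (\<Sum>\<rho>\<in>J. \<rho> x + \<rho> y)"
    using assms unfolding ext_seminorm_def by (intro sum_mono) blast
  then show "(\<Sum>\<rho>\<in>J. \<rho> (x + y)) \<le> (\<Sum>\<rho>\<in>J. \<rho> x) + (\<Sum>\<rho>\<in>J. \<rho> y)"
    by (simp add: sum.distrib)
qed

lemma ext_seminorm_zero:
  fixes smul :: "'k::real_normed_field \<Rightarrow> 'v::ab_group_add \<Rightarrow> 'v"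
  assumes "vector_space smul" "ext_seminorm smul \<rho>"
  shows "\<rho> 0 = 0"
proof -
  interpret vector_space smul by fact
  have "\<rho> (smul 0 0) = ennreal (norm (0::'k)) * \<rho> 0"
    using assms(2) unfolding ext_seminorm_def by blast
  then show ?thesis by simp
qed

lemma ext_seminorm_finite_subspace:
  fixes smul :: "'k::real_normed_field \<Rightarrow> 'v::ab_group_add \<Rightarrow> 'v"
  assumes "vector_space smul" "ext_seminorm smul q"
  shows "module.subspace smul {x. q x < top}"
proof -
  interpret vector_space smul by fact
  show ?thesis
    unfolding subspace_def
  proof (intro conjI ballI allI; clarify)
    show "q 0 < top"
      using ext_seminorm_zero[OF assms] by simp
  next
    fix x y assume "q x < top" "q y < top"
    then show "q (x + y) < top"
      using assms(2) unfolding ext_seminorm_def by (metis ennreal_add_less_top order_le_less_trans)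
  next
    fix c x assume "q x < top"
    then show "q (smul c x) < top"
      using assms(2) unfolding ext_seminorm_def by (simp add: ennreal_mult_less_top)
  qed
qed

lemma enn2real_ext_seminorm_add:
  assumes "ext_seminorm smul q" "q x < top" "q y < top"
  shows "enn2real (q (x + y)) \<le> enn2real (q x) + enn2real (q y)"
proof -
  have "enn2real (q (x + y)) \<le> enn2real (q x + q y)"
    using assms unfolding ext_seminorm_def by (intro enn2real_mono) auto
  also have "\<dots> = enn2real (q x) + enn2real (q y)"
    using assms(2,3) by (rule enn2real_plus)
  finally show ?thesis .
qed

lemma enn2real_ext_seminorm_scale:
  assumes "ext_seminorm smul q"
  shows "enn2real (q (smul c x)) = norm c * enn2real (q x)"
  using assms unfolding ext_seminorm_def by (simp add: enn2real_mult)

lemma norm_le_ext_seminorm_if_bounded_on_ball: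
  fixes smul :: "'k::real_normed_field \<Rightarrow> 'v::ab_group_add \<Rightarrow> 'v" and f :: "'v \<Rightarrow> 'k"
  assumes vs: "vector_space smul" and q: "ext_seminorm smul q" and Y: "module.subspace smul Y"
    and f_scale: "\<And>c y. y \<in> Y \<Longrightarrow> f (smul c y) = c * f y"
    and bound: "\<forall>y\<in>Y. q y < ennreal \<epsilon> \<longrightarrow> norm (f y) < M"
    and "\<epsilon> > 0" "y \<in> Y" "q y < top"
  shows "norm (f y) * \<epsilon> \<le> M * enn2real (q y)"
proof (rule ccontr)
  interpret vector_space smul by fact
  txt \<open>Rescaling a violating \<open>y\<close> by \<open>M / norm (f y)\<close> yields a point of the ball where
    \<open>norm f = M\<close>.\<close>
  assume "\<not> norm (f y) * \<epsilon> \<le> M * enn2real (q y)"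
  then have less: "M * enn2real (q y) < norm (f y) * \<epsilon>"
    by simp
  have "f 0 = 0"
    using f_scale[OF subspace_0[OF Y], of 0] by simp
  then have "M > 0"
    using bound subspace_0[OF Y] ext_seminorm_zero[OF vs q] \<open>\<epsilon> > 0\<close> by fastforce
  then have "norm (f y) > 0"
    using less \<open>\<epsilon> > 0\<close> by (smt (verit) enn2real_nonneg mult_nonneg_nonneg mult_nonpos_nonneg)
  define t where "t = M / norm (f y)"
  have "t > 0"
    using \<open>M > 0\<close> \<open>norm (f y) > 0\<close> by (simp add: t_def)
  have "enn2real (q (smul (of_real t) y)) = t * enn2real (q y)"
    using enn2real_ext_seminorm_scale[OF q] \<open>t > 0\<close> by simp
  also have "\<dots> < \<epsilon>"
    using less \<open>norm (f y) > 0\<close> by (simp add: t_def field_simps)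
  finally have "q (smul (of_real t) y) < ennreal \<epsilon>"
    using \<open>q y < top\<close> q unfolding ext_seminorm_def by (simp add: ennreal_mult_less_top)
  then have "norm (f (smul (of_real t) y)) < M"
    using bound subspace_scale[OF Y \<open>y \<in> Y\<close>] by blast
  moreover have "norm (f (smul (of_real t) y)) = t * norm (f y)"
    using f_scale[OF \<open>y \<in> Y\<close>] \<open>t > 0\<close> by (simp add: norm_mult)
  moreover have "t * norm (f y) = M"
    using \<open>norm (f y) > 0\<close> by (simp add: t_def)
  ultimately show False
    by simp
qed

lemma continuous_map_elc_imp_seminorm_bound:
  fixes f :: "'v::ab_group_add \<Rightarrow> 'k::real_normed_field"
  assumes "0 \<in> Y" "f 0 = 0" "continuous_map (subtopology (elc_topology P) Y) euclidean f"
  shows "\<exists>J (\<epsilon>::real). finite J \<and> J \<subseteq> P \<and> \<epsilon> > 0 \<and>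
           (\<forall>y\<in>Y. (\<Sum>\<rho>\<in>J. \<rho> y) < ennreal \<epsilon> \<longrightarrow> norm (f y) < 1)"
proof -
  have "openin (subtopology (elc_topology P) Y) {y \<in> Y. f y \<in> ball 0 1}"
    using openin_continuous_map_preimage[OF assms(3), of "ball 0 1"] by simp
  then obtain U where U: "openin (elc_topology P) U" "{y \<in> Y. f y \<in> ball 0 1} = U \<inter> Y"
    unfolding openin_subtopology by (elim exE conjE)
  have "0 \<in> {y \<in> Y. f y \<in> ball 0 1}"
    using assms(1,2) by simp
  then have "0 \<in> U"
    unfolding U(2) by (rule IntD1)
  then obtain J and \<epsilon> :: real where J: "finite J" "J \<subseteq> P" "\<epsilon> > 0"
    and sub: "{x. (\<Sum>\<rho>\<in>J. \<rho> (x - 0)) < ennreal \<epsilon>} \<subseteq> U"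
    using U(1) unfolding openin_elc_topology_sum by (elim ballE exE conjE) auto
  have "norm (f y) < 1" if "y \<in> Y" "(\<Sum>\<rho>\<in>J. \<rho> y) < ennreal \<epsilon>" for y
  proof -
    have "y \<in> U \<inter> Y"
      using sub that by auto
    then show ?thesis
      unfolding U(2)[symmetric] by simp
  qed
  with J show ?thesis
    by blast
qed

lemma continuous_map_elc_if_seminorm_bound:
  fixes smul :: "'k::real_normed_field \<Rightarrow> 'v::ab_group_add \<Rightarrow> 'v" and g :: "'v \<Rightarrow> 'k"
  assumes g: "Vector_Spaces.linear smul (*) g"
    and J: "finite J" "J \<subseteq> P" "\<forall>\<rho>\<in>J. ext_seminorm smul \<rho>" and "\<epsilon> > 0"
    and bound: "\<forall>x. (\<Sum>\<rho>\<in>J. \<rho> x) < ennreal \<epsilon> \<longrightarrow> norm (g x) < M"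
  shows "continuous_map (elc_topology P) euclidean g"
proof -
  interpret Vector_Spaces.linear smul "(*)" g by fact
  define q where "q x = (\<Sum>\<rho>\<in>J. \<rho> x)" for x
  have q: "ext_seminorm smul q"
    unfolding q_def using ext_seminorm_sum[OF J(3)] .
  have "q 0 < ennreal \<epsilon>"
    using ext_seminorm_zero[OF vs1.vector_space_axioms q] \<open>\<epsilon> > 0\<close> by simp
  then have "M > 0"
    using bound zero unfolding q_def by fastforce
  have g_le: "norm (g x) * \<epsilon> \<le> M * enn2real (q x)" if "q x < top" for x
    using norm_le_ext_seminorm_if_bounded_on_ball[OF vs1.vector_space_axioms q vs1.subspace_UNIV]
      bound \<open>\<epsilon> > 0\<close> that by (simp add: scale q_def)
  have "openin (elc_topology P) {x. g x \<in> V}" if "open V" for V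
    unfolding openin_elc_topology_sum
  proof
    fix x0 assume "x0 \<in> {x. g x \<in> V}"
    then obtain r where "r > 0" "ball (g x0) r \<subseteq> V"
      using \<open>open V\<close> open_contains_ball by blast
    have "g x \<in> V" if x: "q (x - x0) < ennreal (\<epsilon> * r / M)" for x
    proof -
      have "q (x - x0) < top"
        using x ennreal_less_top order.strict_trans by blast
      then have "norm (g (x - x0)) * \<epsilon> \<le> M * enn2real (q (x - x0))"
        by (rule g_le)
      also have "\<dots> < M * (\<epsilon> * r / M)"
        using x \<open>q (x - x0) < top\<close> \<open>M > 0\<close> by (intro mult_strict_left_mono) simp_all
      also have "\<dots> = r * \<epsilon>"
        using \<open>M > 0\<close> by simp
      finally have "norm (g x - g x0) < r"
        using \<open>\<epsilon> > 0\<close> by (simp add: diff)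
      then show "g x \<in> V"
        using \<open>ball (g x0) r \<subseteq> V\<close> by (auto simp: dist_norm norm_minus_commute)
    qed
    then show "\<exists>J (\<delta>::real). finite J \<and> J \<subseteq> P \<and> \<delta> > 0 \<and>
        {x. (\<Sum>\<rho>\<in>J. \<rho> (x - x0)) < ennreal \<delta>} \<subseteq> {x. g x \<in> V}"
      using J \<open>\<epsilon> > 0\<close> \<open>r > 0\<close> \<open>M > 0\<close> unfolding q_def
      by (intro exI[of _ J] exI[of _ "\<epsilon> * r / M"]) auto
  qed
  then show ?thesis
    by (simp add: continuous_map)
qed

definition dominated_linear_graph ::
    "(real \<Rightarrow> 'a::ab_group_add \<Rightarrow> 'a) \<Rightarrow> 'a set \<Rightarrow> ('a \<Rightarrow> real) \<Rightarrow> ('a \<times> real) set \<Rightarrow> bool" where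
  "dominated_linear_graph smul S p G \<longleftrightarrow>
     single_valued G \<and>
     (\<forall>x a y b. (x, a) \<in> G \<longrightarrow> (y, b) \<in> G \<longrightarrow> (x + y, a + b) \<in> G) \<and>
     (\<forall>c x a. (x, a) \<in> G \<longrightarrow> (smul c x, c * a) \<in> G) \<and>
     (\<forall>x a. (x, a) \<in> G \<longrightarrow> x \<in> S \<longrightarrow> a \<le> p x)"

lemma dominated_linear_graph_Union:
  assumes chain: "\<And>G H. G \<in> \<C> \<Longrightarrow> H \<in> \<C> \<Longrightarrow> G \<subseteq> H \<or> H \<subseteq> G"
    and dom: "\<And>G. G \<in> \<C> \<Longrightarrow> dominated_linear_graph smul S p G"
  shows "dominated_linear_graph smul S p (\<Union>\<C>)"
proof -
  have common: "\<exists>G\<in>\<C>. u \<in> G \<and> v \<in> G" if uv: "u \<in> \<Union>\<C>" "v \<in> \<Union>\<C>" for u v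
  proof -
    obtain G H where "G \<in> \<C>" "H \<in> \<C>" "u \<in> G" "v \<in> H"
      using uv by blast
    then show ?thesis
      using chain[of G H] by blast
  qed
  show ?thesis
    unfolding dominated_linear_graph_def single_valued_def
  proof (intro conjI allI impI)
    fix x a b assume "(x, a) \<in> \<Union>\<C>" "(x, b) \<in> \<Union>\<C>"
    then show "a = b"
      using common dom unfolding dominated_linear_graph_def single_valued_def by metis
  next
    fix x a y b assume "(x, a) \<in> \<Union>\<C>" "(y, b) \<in> \<Union>\<C>"
    then show "(x + y, a + b) \<in> \<Union>\<C>"
      using common dom unfolding dominated_linear_graph_def by (metis UnionI)
  next
    fix c x a assume "(x, a) \<in> \<Union>\<C>"
    then show "(smul c x, c * a) \<in> \<Union>\<C>"
      using dom unfolding dominated_linear_graph_def by blast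
  next
    fix x a assume "(x, a) \<in> \<Union>\<C>" "x \<in> S"
    then show "a \<le> p x"
      using dom unfolding dominated_linear_graph_def by blast
  qed
qed

lemma dominated_linear_graph_zero:
  assumes "vector_space smul" "dominated_linear_graph smul S p G" "G \<noteq> {}"
  shows "(0, 0) \<in> G"
proof -
  interpret vector_space smul by fact
  obtain x a where "(x, a) \<in> G"
    using assms(3) by auto
  then have "(smul 0 x, 0 * a) \<in> G"
    using assms(2) unfolding dominated_linear_graph_def by blast
  then show ?thesis
    by simp
qed

lemma dominated_linear_graph_Domain_subspace:
  assumes "vector_space smul" "dominated_linear_graph smul S p G" "G \<noteq> {}"
  shows "module.subspace smul (Domain G)"
proof -
  interpret vector_space smul by fact
  have "0 \<in> Domain G"
    using dominated_linear_graph_zero[OF assms] by auto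
  then show ?thesis
    using assms(2) unfolding subspace_def dominated_linear_graph_def by blast
qed

lemma subspace_add_scale_coeff_unique:
  assumes "vector_space smul" "module.subspace smul D" "z \<notin> D"
    and "d \<in> D" "d' \<in> D" "d + smul t z = d' + smul t' z"
  shows "t = t'"
proof (rule ccontr)
  interpret vector_space smul by fact
  assume "t \<noteq> t'"
  have "d - d' = smul (t' - t) z"
    using assms(6) by (simp add: scale_left_diff_distrib algebra_simps)
  then have "z = smul (inverse (t' - t)) (d - d')"
    using \<open>t \<noteq> t'\<close> by simp
  then show False
    using assms(3) subspace_scale[OF assms(2) subspace_diff[OF assms(2,4,5)]] by simp
qed

lemma dominated_linear_graph_extend:
  fixes smul :: "real \<Rightarrow> 'a::ab_group_add \<Rightarrow> 'a"
  assumes vs: "vector_space smul" and G: "dominated_linear_graph smul S p G"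
    and z: "z \<notin> Domain G"
    and c: "\<And>d a t. (d, a) \<in> G \<Longrightarrow> d + smul t z \<in> S \<Longrightarrow> a + t * c \<le> p (d + smul t z)"
  shows "dominated_linear_graph smul S p {(d + smul t z, a + t * c) | d a t. (d, a) \<in> G}"
    (is "dominated_linear_graph smul S p ?G'")
proof -
  interpret vector_space smul by fact
  have G_single: "single_valued G"
    and G_add: "\<And>x a y b. (x, a) \<in> G \<Longrightarrow> (y, b) \<in> G \<Longrightarrow> (x + y, a + b) \<in> G"
    and G_scale: "\<And>c x a. (x, a) \<in> G \<Longrightarrow> (smul c x, c * a) \<in> G"
    using G unfolding dominated_linear_graph_def by blast+
  have coeff_unique: "t = t'" if "d \<in> Domain G" "d' \<in> Domain G" "d + smul t z = d' + smul t' z"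
    for d d' t t'
    using subspace_add_scale_coeff_unique[OF vs _ z that]
      dominated_linear_graph_Domain_subspace[OF vs G] that(1) by blast
  show ?thesis
    unfolding dominated_linear_graph_def single_valued_def
  proof (intro conjI allI impI)
    fix x a b assume "(x, a) \<in> ?G'" "(x, b) \<in> ?G'"
    then obtain d1 a1 t1 d2 a2 t2 where "(d1, a1) \<in> G" "(d2, a2) \<in> G"
      "x = d1 + smul t1 z" "x = d2 + smul t2 z" "a = a1 + t1 * c" "b = a2 + t2 * c"
      by blast
    moreover from this have "t1 = t2"
      using coeff_unique by (metis Domain.DomainI)
    ultimately show "a = b"
      using G_single unfolding single_valued_def by auto
  next
    fix x a y b assume "(x, a) \<in> ?G'" "(y, b) \<in> ?G'"
    then obtain d1 a1 t1 d2 a2 t2 where "(d1, a1) \<in> G" "(d2, a2) \<in> G"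
      "x = d1 + smul t1 z" "y = d2 + smul t2 z" "a = a1 + t1 * c" "b = a2 + t2 * c"
      by blast
    moreover from this have "x + y = (d1 + d2) + smul (t1 + t2) z" "a + b = (a1 + a2) + (t1 + t2) * c"
      by (simp_all add: scale_left_distrib algebra_simps)
    ultimately show "(x + y, a + b) \<in> ?G'"
      using G_add by blast
  next
    fix k x a assume "(x, a) \<in> ?G'"
    then obtain d a' t where "(d, a') \<in> G" "x = d + smul t z" "a = a' + t * c"
      by blast
    moreover from this have "smul k x = smul k d + smul (k * t) z" "k * a = k * a' + (k * t) * c"
      by (simp_all add: scale_right_distrib algebra_simps)
    ultimately show "(smul k x, k * a) \<in> ?G'"
      using G_scale by blast
  next
    fix x a assume "(x, a) \<in> ?G'" "x \<in> S"
    then show "a \<le> p x"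
      using c by blast
  qed
qed

lemma dominated_linear_graph_separating_constant:
  fixes smul :: "real \<Rightarrow> 'a::ab_group_add \<Rightarrow> 'a"
  assumes vs: "vector_space smul" and S: "module.subspace smul S"
    and subadd: "\<And>x y. x \<in> S \<Longrightarrow> y \<in> S \<Longrightarrow> p (x + y) \<le> p x + p y"
    and G: "dominated_linear_graph smul S p G" "G \<noteq> {}" and "z \<in> S"
  shows "\<exists>c. \<forall>d a. (d, a) \<in> G \<longrightarrow> d \<in> S \<longrightarrow> a - p (d - z) \<le> c \<and> c \<le> p (d + z) - a"
proof -
  interpret vector_space smul by fact
  have separated: "a1 - p (d1 - z) \<le> p (d2 + z) - a2"
    if "(d1, a1) \<in> G" "d1 \<in> S" "(d2, a2) \<in> G" "d2 \<in> S" for d1 a1 d2 a2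
  proof -
    have "(d1 + d2, a1 + a2) \<in> G"
      using G(1) that(1,3) unfolding dominated_linear_graph_def by blast
    then have "a1 + a2 \<le> p (d1 + d2)"
      using G(1) subspace_add[OF S that(2,4)] unfolding dominated_linear_graph_def by blast
    also have "d1 + d2 = (d1 - z) + (d2 + z)"
      by simp
    also have "p \<dots> \<le> p (d1 - z) + p (d2 + z)"
      using subadd subspace_diff[OF S that(2) \<open>z \<in> S\<close>] subspace_add[OF S that(4) \<open>z \<in> S\<close>] .
    finally show ?thesis
      by simp
  qed
  have "(0, 0) \<in> G"
    using dominated_linear_graph_zero[OF vs G] .
  define L where "L = {a - p (d - z) | d a. (d, a) \<in> G \<and> d \<in> S}"
  have "L \<noteq> {}"
    using \<open>(0, 0) \<in> G\<close> subspace_0[OF S] unfolding L_def by blast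
  have "l \<le> p (0 + z) - 0" if "l \<in> L" for l
    using that separated[OF _ _ \<open>(0, 0) \<in> G\<close> subspace_0[OF S]] unfolding L_def by blast
  then have "bdd_above L"
    by (rule bdd_aboveI)
  have "a - p (d - z) \<le> Sup L \<and> Sup L \<le> p (d + z) - a" if "(d, a) \<in> G" "d \<in> S" for d a
  proof
    show "a - p (d - z) \<le> Sup L"
      using \<open>bdd_above L\<close> that by (intro cSup_upper) (auto simp: L_def)
    show "Sup L \<le> p (d + z) - a"
      using \<open>L \<noteq> {}\<close> that separated by (intro cSup_least) (auto simp: L_def)
  qed
  then show ?thesis
    by blast
qed

lemma dominated_linear_graph_scaled_bound:
  fixes smul :: "real \<Rightarrow> 'a::ab_group_add \<Rightarrow> 'a"
  assumes vs: "vector_space smul" and S: "module.subspace smul S"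
    and hom: "\<And>t x. t \<ge> 0 \<Longrightarrow> x \<in> S \<Longrightarrow> p (smul t x) = t * p x"
    and G: "dominated_linear_graph smul S p G"
    and bound: "\<And>d a. (d, a) \<in> G \<Longrightarrow> d \<in> S \<Longrightarrow> a + k \<le> p (d + w)"
    and "(d, a) \<in> G" "d \<in> S" "w \<in> S" "s > 0"
  shows "a + s * k \<le> p (d + smul s w)"
proof -
  interpret vector_space smul by fact
  have "(smul (1 / s) d, (1 / s) * a) \<in> G"
    using G \<open>(d, a) \<in> G\<close> unfolding dominated_linear_graph_def by blast
  then have "(1 / s) * a + k \<le> p (smul (1 / s) d + w)"
    using bound subspace_scale[OF S \<open>d \<in> S\<close>] by blast
  then have "a + s * k \<le> s * p (smul (1 / s) d + w)"
    using \<open>s > 0\<close> by (simp add: field_simps)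
  also have "\<dots> = p (smul s (smul (1 / s) d + w))"
    using hom[of s] subspace_add[OF S subspace_scale[OF S \<open>d \<in> S\<close>] \<open>w \<in> S\<close>] \<open>s > 0\<close> by simp
  also have "smul s (smul (1 / s) d + w) = d + smul s w"
    using \<open>s > 0\<close> by (simp add: scale_right_distrib)
  finally show ?thesis .
qed

lemma dominated_linear_graph_extension_constant:
  fixes smul :: "real \<Rightarrow> 'a::ab_group_add \<Rightarrow> 'a"
  assumes vs: "vector_space smul" and S: "module.subspace smul S"
    and subadd: "\<And>x y. x \<in> S \<Longrightarrow> y \<in> S \<Longrightarrow> p (x + y) \<le> p x + p y"
    and hom: "\<And>t x. t \<ge> 0 \<Longrightarrow> x \<in> S \<Longrightarrow> p (smul t x) = t * p x"
    and G: "dominated_linear_graph smul S p G" "G \<noteq> {}" and "z \<in> S"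
  shows "\<exists>c. \<forall>d a t. (d, a) \<in> G \<longrightarrow> d + smul t z \<in> S \<longrightarrow> a + t * c \<le> p (d + smul t z)"
proof -
  interpret vector_space smul by fact
  obtain c where c: "\<And>d a. (d, a) \<in> G \<Longrightarrow> d \<in> S \<Longrightarrow> a - p (d - z) \<le> c \<and> c \<le> p (d + z) - a"
    using dominated_linear_graph_separating_constant[OF vs S subadd G \<open>z \<in> S\<close>] by blast
  have plus: "a + c \<le> p (d + z)" and minus: "a + - c \<le> p (d + - z)"
    if "(d, a) \<in> G" "d \<in> S" for d a
    using c[OF that] by auto
  have "a + t * c \<le> p (d + smul t z)" if "(d, a) \<in> G" "d + smul t z \<in> S" for d a t
  proof -
    have "d \<in> S"
      using subspace_diff[OF S that(2) subspace_scale[OF S \<open>z \<in> S\<close>, of t]] by simp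
    consider "t = 0" | "t > 0" | "t < 0"
      by linarith
    then show ?thesis
    proof cases
      case 1
      then show ?thesis
        using G(1) that(1) \<open>d \<in> S\<close> unfolding dominated_linear_graph_def by simp
    next
      case 2
      show ?thesis
        using dominated_linear_graph_scaled_bound[OF vs S hom G(1) plus that(1) \<open>d \<in> S\<close> \<open>z \<in> S\<close> 2] .
    next
      case 3
      have "- z \<in> S"
        using subspace_neg[OF S \<open>z \<in> S\<close>] .
      then show ?thesis
        using dominated_linear_graph_scaled_bound[OF vs S hom G(1) minus that(1) \<open>d \<in> S\<close>, of "- t"] 3
        by simp
    qed
  qed
  then show ?thesis
    by blast
qed

lemma dominated_linear_graph_extension_avoiding_S:
  fixes smul :: "real \<Rightarrow> 'a::ab_group_add \<Rightarrow> 'a"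
  assumes vs: "vector_space smul" and S: "module.subspace smul S"
    and G: "dominated_linear_graph smul S p G" and avoid: "\<forall>d\<in>Domain G. x + d \<notin> S"
    and "(d, a) \<in> G" "d + smul t x \<in> S"
  shows "a + t * 0 \<le> p (d + smul t x)"
proof -
  interpret vector_space smul by fact
  have D: "subspace (Domain G)"
    using dominated_linear_graph_Domain_subspace[OF vs G] assms(5) by blast
  show ?thesis
  proof (cases "t = 0")
    case True
    then show ?thesis
      using G assms(5,6) unfolding dominated_linear_graph_def by simp
  next
    case False
    have "smul (1 / t) (d + smul t x) = x + smul (1 / t) d"
      using False by (simp add: scale_right_distrib add.commute)
    then have "x + smul (1 / t) d \<in> S"
      using subspace_scale[OF S assms(6)] by metis
    moreover have "smul (1 / t) d \<in> Domain G"
      using subspace_scale[OF D] assms(5) by blast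
    ultimately show ?thesis
      using avoid by blast
  qed
qed

lemma dominated_linear_graph_proper_extension:
  fixes smul :: "real \<Rightarrow> 'a::ab_group_add \<Rightarrow> 'a"
  assumes vs: "vector_space smul" and S: "module.subspace smul S"
    and subadd: "\<And>x y. x \<in> S \<Longrightarrow> y \<in> S \<Longrightarrow> p (x + y) \<le> p x + p y"
    and hom: "\<And>t x. t \<ge> 0 \<Longrightarrow> x \<in> S \<Longrightarrow> p (smul t x) = t * p x"
    and G: "dominated_linear_graph smul S p G" "G \<noteq> {}" and "x \<notin> Domain G"
  shows "\<exists>G'. dominated_linear_graph smul S p G' \<and> G \<subset> G'"
proof -
  interpret vector_space smul by fact
  have D: "subspace (Domain G)"
    using dominated_linear_graph_Domain_subspace[OF vs G] .
  txt \<open>Choose the new direction \<open>z\<close> in \<open>S\<close> if possible; otherwise the lines through \<open>Domain G\<close>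
    in direction \<open>x\<close> meet \<open>S\<close> only inside \<open>Domain G\<close>, and \<open>c = 0\<close> works.\<close>
  obtain z c where z: "z \<notin> Domain G"
    and c: "\<And>d a t. (d, a) \<in> G \<Longrightarrow> d + smul t z \<in> S \<Longrightarrow> a + t * c \<le> p (d + smul t z)"
  proof (cases "\<exists>d0\<in>Domain G. x + d0 \<in> S")
    case True
    then obtain d0 where "d0 \<in> Domain G" "x + d0 \<in> S"
      by blast
    moreover have "x + d0 \<notin> Domain G"
      using \<open>x \<notin> Domain G\<close> subspace_diff[OF D _ \<open>d0 \<in> Domain G\<close>, of "x + d0"] by auto
    ultimately show ?thesis
      using that dominated_linear_graph_extension_constant[OF vs S subadd hom G] by blast
  next
    case False
    then show ?thesis
      using that[of x 0] \<open>x \<notin> Domain G\<close> dominated_linear_graph_extension_avoiding_S[OF vs S G(1)]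
      by blast
  qed
  define G' where "G' = {(d + smul t z, a + t * c) | d a t. (d, a) \<in> G}"
  have "dominated_linear_graph smul S p G'"
    unfolding G'_def using dominated_linear_graph_extend[OF vs G(1) z c] .
  moreover have "G \<subseteq> G'"
    unfolding G'_def by (force intro: exI[of _ 0])
  moreover have "(z, c) \<in> G'"
    unfolding G'_def using dominated_linear_graph_zero[OF vs G] by (force intro: exI[of _ 1])
  then have "G \<noteq> G'"
    using z by blast
  ultimately show ?thesis
    by blast
qed

lemma total_dominated_linear_graph_exists:
  fixes smul :: "real \<Rightarrow> 'a::ab_group_add \<Rightarrow> 'a"
  assumes vs: "vector_space smul" and S: "module.subspace smul S"
    and subadd: "\<And>x y. x \<in> S \<Longrightarrow> y \<in> S \<Longrightarrow> p (x + y) \<le> p x + p y"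
    and hom: "\<And>t x. t \<ge> 0 \<Longrightarrow> x \<in> S \<Longrightarrow> p (smul t x) = t * p x"
    and G0: "dominated_linear_graph smul S p G0" "G0 \<noteq> {}"
  shows "\<exists>M. dominated_linear_graph smul S p M \<and> G0 \<subseteq> M \<and> Domain M = UNIV"
proof -
  define \<A> where "\<A> = {G. dominated_linear_graph smul S p G \<and> G0 \<subseteq> G}"
  have "\<Union>\<C> \<in> \<A>" if "\<C> \<noteq> {}" "subset.chain \<A> \<C>" for \<C>
  proof -
    have "dominated_linear_graph smul S p (\<Union>\<C>)"
      using that(2) unfolding subset_chain_def \<A>_def by (intro dominated_linear_graph_Union) auto
    moreover have "G0 \<subseteq> \<Union>\<C>"
      using that unfolding subset_chain_def \<A>_def by blast
    ultimately show ?thesis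
      unfolding \<A>_def by blast
  qed
  moreover have "G0 \<in> \<A>"
    using G0(1) unfolding \<A>_def by blast
  ultimately obtain M where "M \<in> \<A>" and max: "\<And>G. G \<in> \<A> \<Longrightarrow> M \<subseteq> G \<Longrightarrow> G = M"
    using subset_Zorn_nonempty[of \<A>] by blast
  then have M: "dominated_linear_graph smul S p M" "M \<noteq> {}" and "G0 \<subseteq> M"
    using G0(2) unfolding \<A>_def by auto
  have "x \<in> Domain M" for x
  proof (rule ccontr)
    assume "x \<notin> Domain M"
    then obtain G' where "dominated_linear_graph smul S p G'" "M \<subset> G'"
      using dominated_linear_graph_proper_extension[OF vs S subadd hom M] by blast
    moreover from this have "G' \<in> \<A>"
      using \<open>G0 \<subseteq> M\<close> unfolding \<A>_def by blast
    ultimately show False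
      using max by blast
  qed
  with M(1) \<open>G0 \<subseteq> M\<close> show ?thesis
    by blast
qed

lemma total_dominated_linear_graph_imp_linear:
  assumes vs: "vector_space smul" and M: "dominated_linear_graph smul S p M"
    and total: "Domain M = UNIV"
  shows "\<exists>g. Vector_Spaces.linear smul (*) g \<and> (\<forall>x. (x, g x) \<in> M)"
proof -
  have M_single: "single_valued M"
    and M_add: "\<And>x a y b. (x, a) \<in> M \<Longrightarrow> (y, b) \<in> M \<Longrightarrow> (x + y, a + b) \<in> M"
    and M_scale: "\<And>c x a. (x, a) \<in> M \<Longrightarrow> (smul c x, c * a) \<in> M"
    using M unfolding dominated_linear_graph_def by blast+
  define g where "g x = (THE a. (x, a) \<in> M)" for x
  have g_eq: "g x = a" if "(x, a) \<in> M" for x a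
    unfolding g_def using that M_single by (auto simp: single_valued_def)
  have g_M: "(x, g x) \<in> M" for x
    using total g_eq by blast
  have "Vector_Spaces.linear smul (*) g"
    unfolding Vector_Spaces.linear_iff
    using vs vector_space_over_itself.vector_space_axioms g_eq[OF M_add[OF g_M g_M]] g_eq[OF M_scale[OF g_M]]
    by blast
  with g_M show ?thesis
    by blast
qed

lemma hahn_banach_dominated_on_subspace:
  fixes smul :: "real \<Rightarrow> 'a::ab_group_add \<Rightarrow> 'a" and p f :: "'a \<Rightarrow> real"
  assumes vs: "vector_space smul" and S: "module.subspace smul S" and Y: "module.subspace smul Y"
    and subadd: "\<And>x y. x \<in> S \<Longrightarrow> y \<in> S \<Longrightarrow> p (x + y) \<le> p x + p y"
    and hom: "\<And>t x. t \<ge> 0 \<Longrightarrow> x \<in> S \<Longrightarrow> p (smul t x) = t * p x"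
    and f: "linear_functional_on smul Y f" and f_le: "\<And>y. y \<in> Y \<Longrightarrow> y \<in> S \<Longrightarrow> f y \<le> p y"
  shows "\<exists>g. Vector_Spaces.linear smul (*) g \<and> (\<forall>y\<in>Y. g y = f y) \<and> (\<forall>x\<in>S. g x \<le> p x)"
proof -
  interpret vector_space smul by fact
  define graph_f where "graph_f = (\<lambda>y. (y, f y)) ` Y"
  have "dominated_linear_graph smul S p graph_f"
    using f f_le subspace_add[OF Y] subspace_scale[OF Y]
    unfolding graph_f_def dominated_linear_graph_def linear_functional_on_def single_valued_def
    by auto
  moreover have "graph_f \<noteq> {}"
    using subspace_0[OF Y] unfolding graph_f_def by blast
  ultimately obtain M where M: "dominated_linear_graph smul S p M" "graph_f \<subseteq> M" "Domain M = UNIV"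
    using total_dominated_linear_graph_exists[OF vs S subadd hom] by blast
  then obtain g where g: "Vector_Spaces.linear smul (*) g" "\<And>x. (x, g x) \<in> M"
    using total_dominated_linear_graph_imp_linear[OF vs] by blast
  have "g y = f y" if "y \<in> Y" for y
    using M(1,2) g(2) that single_valuedD unfolding graph_f_def dominated_linear_graph_def by fast
  moreover have "g x \<le> p x" if "x \<in> S" for x
    using M(1) g(2) that unfolding dominated_linear_graph_def by blast
  ultimately show ?thesis
    using g(1) by blast
qed

lemma hahn_banach_ext_seminorm:
  fixes smul :: "real \<Rightarrow> 'a::ab_group_add \<Rightarrow> 'a" and f :: "'a \<Rightarrow> real"
  assumes vs: "vector_space smul" and q: "ext_seminorm smul q" and Y: "module.subspace smul Y"
    and f: "linear_functional_on smul Y f" and "\<epsilon> > 0"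
    and f_le: "\<And>y. y \<in> Y \<Longrightarrow> q y < top \<Longrightarrow> f y * \<epsilon> \<le> enn2real (q y)"
  shows "\<exists>g. Vector_Spaces.linear smul (*) g \<and> (\<forall>y\<in>Y. g y = f y) \<and>
             (\<forall>x. q x < top \<longrightarrow> \<bar>g x\<bar> * \<epsilon> \<le> enn2real (q x))"
proof -
  interpret vector_space smul by fact
  define S where "S = {x. q x < top}"
  define p where "p x = enn2real (q x) / \<epsilon>" for x
  have S: "subspace S"
    unfolding S_def by (rule ext_seminorm_finite_subspace[OF vs q])
  have subadd: "p (x + y) \<le> p x + p y" if "x \<in> S" "y \<in> S" for x y
  proof -
    have "enn2real (q (x + y)) \<le> enn2real (q x) + enn2real (q y)"
      using enn2real_ext_seminorm_add[OF q] that unfolding S_def by blast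
    then show ?thesis
      unfolding p_def using \<open>\<epsilon> > 0\<close> by (metis add_divide_distrib divide_right_mono less_imp_le)
  qed
  have p_scale: "p (smul t x) = \<bar>t\<bar> * p x" for t x
    unfolding p_def enn2real_ext_seminorm_scale[OF q] by simp
  have p_hom: "p (smul t x) = t * p x" if "t \<ge> 0" for t x
    using p_scale that by simp
  have "f y \<le> p y" if "y \<in> Y" "y \<in> S" for y
    using f_le[OF that(1)] that(2) \<open>\<epsilon> > 0\<close> unfolding p_def S_def by (simp add: field_simps)
  then obtain g where g: "Vector_Spaces.linear smul (*) g" "\<forall>y\<in>Y. g y = f y" "\<forall>x\<in>S. g x \<le> p x"
    using hahn_banach_dominated_on_subspace[OF vs S Y subadd p_hom f] by blast
  interpret g: Vector_Spaces.linear smul "(*)" g by fact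
  have "\<bar>g x\<bar> \<le> p x" if "x \<in> S" for x
  proof -
    have "g (- x) \<le> p (- x)"
      using g(3) subspace_neg[OF S that] by blast
    then have "- g x \<le> p x"
      using p_scale[of "-1" x] g.neg[of x] by simp
    moreover have "g x \<le> p x"
      using g(3) that by blast
    ultimately show ?thesis
      by simp
  qed
  then have "\<bar>g x\<bar> * \<epsilon> \<le> enn2real (q x)" if "q x < top" for x
    using that \<open>\<epsilon> > 0\<close> unfolding p_def S_def by (simp add: field_simps)
  with g(1,2) show ?thesis
    by blast
qed

lemma bounded_extension_real:
  fixes smul :: "real \<Rightarrow> 'a::ab_group_add \<Rightarrow> 'a" and f :: "'a \<Rightarrow> real"
  assumes vs: "vector_space smul" and q: "ext_seminorm smul q" and Y: "module.subspace smul Y"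
    and f: "linear_functional_on smul Y f" and "\<epsilon> > 0"
    and bound: "\<forall>y\<in>Y. q y < ennreal \<epsilon> \<longrightarrow> norm (f y) < 1"
  shows "\<exists>g. Vector_Spaces.linear smul (*) g \<and> (\<forall>y\<in>Y. g y = f y) \<and>
             (\<forall>x. q x < ennreal \<epsilon> \<longrightarrow> norm (g x) < 1)"
proof -
  have "f y * \<epsilon> \<le> enn2real (q y)" if "y \<in> Y" "q y < top" for y
  proof -
    have "f y * \<epsilon> \<le> norm (f y) * \<epsilon>"
      using \<open>\<epsilon> > 0\<close> by (intro mult_right_mono) auto
    also have "\<dots> \<le> 1 * enn2real (q y)"
      using norm_le_ext_seminorm_if_bounded_on_ball[OF vs q Y _ bound \<open>\<epsilon> > 0\<close> that] f that(1)
      unfolding linear_functional_on_def by blast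
    finally show ?thesis
      by simp
  qed
  then obtain g where g: "Vector_Spaces.linear smul (*) g" "\<forall>y\<in>Y. g y = f y"
    and g_le: "\<forall>x. q x < top \<longrightarrow> \<bar>g x\<bar> * \<epsilon> \<le> enn2real (q x)"
    using hahn_banach_ext_seminorm[OF vs q Y f \<open>\<epsilon> > 0\<close>] by blast
  have "norm (g x) < 1" if "q x < ennreal \<epsilon>" for x
  proof -
    have "q x < top"
      using order.strict_trans[OF that ennreal_less_top] .
    then have "\<bar>g x\<bar> * \<epsilon> < \<epsilon>"
      using g_le that by (meson enn2real_less_iff order.strict_trans1)
    then show ?thesis
      using \<open>\<epsilon> > 0\<close> by simp
  qed
  with g show ?thesis
    by blast
qed

lemma linear_complexification:
  fixes smul :: "complex \<Rightarrow> 'a::ab_group_add \<Rightarrow> 'a" and G :: "'a \<Rightarrow> real"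
  assumes vs: "vector_space smul" and G: "Vector_Spaces.linear (\<lambda>r. smul (of_real r)) (*) G"
  shows "Vector_Spaces.linear smul (*) (\<lambda>x. of_real (G x) - \<i> * of_real (G (smul \<i> x)))"
proof -
  interpret vector_space smul by fact
  have G_add: "G (x + y) = G x + G y" and G_scale: "G (smul (of_real r) x) = r * G x" for x y r
    using G unfolding Vector_Spaces.linear_iff by auto
  have G_decompose: "G (smul c x) = Re c * G x + Im c * G (smul \<i> x)" for c x
  proof -
    have "of_real (Re c) + of_real (Im c) * \<i> = c"
      by (simp add: complex_eq_iff)
    then have "smul c x = smul (of_real (Re c) + of_real (Im c) * \<i>) x"
      by (simp only:)
    also have "\<dots> = smul (of_real (Re c)) x + smul (of_real (Im c)) (smul \<i> x)"
      by (simp only: scale_left_distrib scale_scale)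
    finally show ?thesis
      by (simp only: G_add G_scale)
  qed
  show ?thesis
    unfolding Vector_Spaces.linear_iff
  proof (intro conjI allI vs vector_space_over_itself.vector_space_axioms)
    fix x y
    show "of_real (G (x + y)) - \<i> * of_real (G (smul \<i> (x + y))) =
        of_real (G x) - \<i> * of_real (G (smul \<i> x)) + (of_real (G y) - \<i> * of_real (G (smul \<i> y)))"
      by (simp add: scale_right_distrib G_add algebra_simps)
  next
    fix c x
    have "G (smul \<i> (smul c x)) = - Im c * G x + Re c * G (smul \<i> x)"
      using G_decompose[of "\<i> * c" x] by simp
    then show "of_real (G (smul c x)) - \<i> * of_real (G (smul \<i> (smul c x))) =
        c * (of_real (G x) - \<i> * of_real (G (smul \<i> x)))"
      unfolding G_decompose[of c x] by (simp add: complex_eq_iff algebra_simps)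
  qed
qed

lemma complexification_Re_eq:
  fixes smul :: "complex \<Rightarrow> 'a::ab_group_add \<Rightarrow> 'a" and f :: "'a \<Rightarrow> complex"
  assumes "vector_space smul" "module.subspace smul Y" "linear_functional_on smul Y f"
    and G: "\<forall>y\<in>Y. G y = Re (f y)"
  shows "\<forall>y\<in>Y. of_real (G y) - \<i> * of_real (G (smul \<i> y)) = f y"
proof
  interpret vector_space smul by fact
  fix y assume "y \<in> Y"
  then have "G (smul \<i> y) = - Im (f y)"
    using G assms(3) subspace_scale[OF assms(2)] unfolding linear_functional_on_def by simp
  then show "of_real (G y) - \<i> * of_real (G (smul \<i> y)) = f y"
    using G \<open>y \<in> Y\<close> by (simp add: complex_eq_iff)
qed

lemma bounded_extension_complex:
  fixes smul :: "complex \<Rightarrow> 'a::ab_group_add \<Rightarrow> 'a" and f :: "'a \<Rightarrow> complex"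
  assumes vs: "vector_space smul" and q: "ext_seminorm smul q" and Y: "module.subspace smul Y"
    and f: "linear_functional_on smul Y f" and "\<epsilon> > 0"
    and bound: "\<forall>y\<in>Y. q y < ennreal \<epsilon> \<longrightarrow> norm (f y) < 1"
  shows "\<exists>g. Vector_Spaces.linear smul (*) g \<and> (\<forall>y\<in>Y. g y = f y) \<and>
             (\<forall>x. q x < ennreal \<epsilon> \<longrightarrow> norm (g x) < 2)"
proof -
  interpret vector_space smul by fact
  define rsmul where "rsmul r x = smul (of_real r) x" for r x
  have rvs: "vector_space rsmul"
    by unfold_locales (simp_all add: rsmul_def scale_right_distrib scale_left_distrib)
  interpret R: vector_space rsmul by fact
  have rq: "ext_seminorm rsmul q"
    using q unfolding ext_seminorm_def rsmul_def by simp
  have rY: "R.subspace Y"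
    using Y unfolding R.subspace_def subspace_def rsmul_def by blast
  have rf: "linear_functional_on rsmul Y (\<lambda>y. Re (f y))"
    using f unfolding linear_functional_on_def rsmul_def by simp
  have "\<forall>y\<in>Y. q y < ennreal \<epsilon> \<longrightarrow> norm (Re (f y)) < 1"
    using bound by (auto intro: le_less_trans[OF abs_Re_le_cmod])
  then obtain G where G: "Vector_Spaces.linear rsmul (*) G" "\<forall>y\<in>Y. G y = Re (f y)"
    and G_bound: "\<forall>x. q x < ennreal \<epsilon> \<longrightarrow> norm (G x) < 1"
    using bounded_extension_real[OF rvs rq rY rf \<open>\<epsilon> > 0\<close>] by blast
  define g where "g x = of_real (G x) - \<i> * of_real (G (smul \<i> x))" for x
  have "Vector_Spaces.linear smul (*) g"
    unfolding g_def using linear_complexification[OF vs] G(1) unfolding rsmul_def by blast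
  moreover have "\<forall>y\<in>Y. g y = f y"
    unfolding g_def using complexification_Re_eq[OF vs Y f G(2)] .
  moreover have "norm (g x) < 2" if "q x < ennreal \<epsilon>" for x
  proof -
    have "q (smul \<i> x) = q x"
      using q unfolding ext_seminorm_def by simp
    then have "\<bar>G x\<bar> < 1" "\<bar>G (smul \<i> x)\<bar> < 1"
      using G_bound that by auto
    moreover have "norm (g x) \<le> \<bar>G x\<bar> + \<bar>G (smul \<i> x)\<bar>"
      unfolding g_def by (rule order.trans[OF norm_triangle_ineq4]) (simp add: norm_mult)
    ultimately show ?thesis
      by simp
  qed
  ultimately show ?thesis
    by blast
qed

text \<open>The continuous linear functionals are those bounded on a ball of a finite sum of
  seminorms of the family, so it suffices to extend \<open>f\<close> keeping such a bound.\<close>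
lemma continuous_extension_if_bounded_extension:
  fixes smul :: "'k::real_normed_field \<Rightarrow> 'a::ab_group_add \<Rightarrow> 'a" and f :: "'a \<Rightarrow> 'k"
  assumes vs: "vector_space smul" and P: "\<forall>\<rho>\<in>P. ext_seminorm smul \<rho>"
    and Y: "module.subspace smul Y" and f: "linear_functional_on smul Y f"
    and cont: "continuous_map (subtopology (elc_topology P) Y) euclidean f"
    and extend: "\<And>q \<epsilon>. ext_seminorm smul q \<Longrightarrow> \<epsilon> > 0 \<Longrightarrow>
        \<forall>y\<in>Y. q y < ennreal \<epsilon> \<longrightarrow> norm (f y) < 1 \<Longrightarrow>
        \<exists>g. Vector_Spaces.linear smul (*) g \<and> (\<forall>y\<in>Y. g y = f y) \<and>
            (\<forall>x. q x < ennreal \<epsilon> \<longrightarrow> norm (g x) < M)"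
  shows "\<exists>g. Vector_Spaces.linear smul (*) g \<and> continuous_map (elc_topology P) euclidean g \<and>
             (\<forall>y\<in>Y. g y = f y)"
proof -
  interpret vector_space smul by fact
  have "f 0 = 0"
    using f subspace_0[OF Y] unfolding linear_functional_on_def by (metis scale_zero_left mult_zero_left)
  then obtain J and \<epsilon> :: real where J: "finite J" "J \<subseteq> P" "\<epsilon> > 0"
    and bound: "\<forall>y\<in>Y. (\<Sum>\<rho>\<in>J. \<rho> y) < ennreal \<epsilon> \<longrightarrow> norm (f y) < 1"
    using continuous_map_elc_imp_seminorm_bound[OF subspace_0[OF Y] _ cont] by blast
  have J_seminorms: "\<forall>\<rho>\<in>J. ext_seminorm smul \<rho>"
    using P J(2) by blast
  then obtain g where g: "Vector_Spaces.linear smul (*) g" "\<forall>y\<in>Y. g y = f y"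
    and g_bound: "\<forall>x. (\<Sum>\<rho>\<in>J. \<rho> x) < ennreal \<epsilon> \<longrightarrow> norm (g x) < M"
    using extend[OF ext_seminorm_sum \<open>\<epsilon> > 0\<close> bound] by blast
  moreover have "continuous_map (elc_topology P) euclidean g"
    using continuous_map_elc_if_seminorm_bound[OF g(1) J(1,2) J_seminorms \<open>\<epsilon> > 0\<close> g_bound] .
  ultimately show ?thesis
    by blast
qed

theorem corollary4p2:
  shows
  "(\<forall>(smul :: real \<Rightarrow> 'a::ab_group_add \<Rightarrow> 'a) (P :: ('a \<Rightarrow> ennreal) set) (Y :: 'a set) (f :: 'a \<Rightarrow> real).
      vector_space smul \<and> (\<forall>\<rho>\<in>P. ext_seminorm smul \<rho>) \<and> module.subspace smul Y \<and>
      linear_functional_on smul Y f \<and>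
      continuous_map (subtopology (elc_topology P) Y) euclidean f
      \<longrightarrow> (\<exists>g. Vector_Spaces.linear smul (*) g \<and> continuous_map (elc_topology P) euclidean g \<and>
              (\<forall>y\<in>Y. g y = f y)))
   \<and>
   (\<forall>(smul :: complex \<Rightarrow> 'b::ab_group_add \<Rightarrow> 'b) (P :: ('b \<Rightarrow> ennreal) set) (Y :: 'b set) (f :: 'b \<Rightarrow> complex).
      vector_space smul \<and> (\<forall>\<rho>\<in>P. ext_seminorm smul \<rho>) \<and> module.subspace smul Y \<and>
      linear_functional_on smul Y f \<and>
      continuous_map (subtopology (elc_topology P) Y) euclidean f
      \<longrightarrow> (\<exists>g. Vector_Spaces.linear smul (*) g \<and> continuous_map (elc_topology P) euclidean g \<and>
              (\<forall>y\<in>Y. g y = f y)))"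
proof (intro conjI allI impI; elim conjE)
  fix smul :: "real \<Rightarrow> 'a \<Rightarrow> 'a" and P Y and f :: "'a \<Rightarrow> real"
  assume vs: "vector_space smul" and P: "\<forall>\<rho>\<in>P. ext_seminorm smul \<rho>"
    and Y: "module.subspace smul Y" and f: "linear_functional_on smul Y f"
    and cont: "continuous_map (subtopology (elc_topology P) Y) euclidean f"
  show "\<exists>g. Vector_Spaces.linear smul (*) g \<and> continuous_map (elc_topology P) euclidean g \<and>
      (\<forall>y\<in>Y. g y = f y)"
    by (rule continuous_extension_if_bounded_extension[OF vs P Y f cont
          bounded_extension_real[OF vs _ Y f]])
next
  fix smul :: "complex \<Rightarrow> 'b \<Rightarrow> 'b" and P Y and f :: "'b \<Rightarrow> complex"
  assume vs: "vector_space smul" and P: "\<forall>\<rho>\<in>P. ext_seminorm smul \<rho>"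
    and Y: "module.subspace smul Y" and f: "linear_functional_on smul Y f"
    and cont: "continuous_map (subtopology (elc_topology P) Y) euclidean f"
  show "\<exists>g. Vector_Spaces.linear smul (*) g \<and> continuous_map (elc_topology P) euclidean g \<and>
      (\<forall>y\<in>Y. g y = f y)"
    by (rule continuous_extension_if_bounded_extension[OF vs P Y f cont
          bounded_extension_complex[OF vs _ Y f]])
qed

end
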